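(* Consider a steady travelling-wave solution of the one-dimensional solid-propellant combustion model described in the context, with $c<0$ and $\dot m=-\rho_s c>0$. Then $x\mapsto \omega(x)$ is integrable on $(0,\infty)$ and $$\int_0^{+\infty}\omega(x)\,dx=-\frac{\dot m}{M\nu}.$$
   Context: Travelling-wave frame: solid in $x<0$, gas in $x>0$, interface at $x=0$; $c<0$ is the constant regression velocity, $\rho_s>0$ the solid density and $\dot m:=-\rho_s c$. The gas contains two species with common molar mass $M>0$: a reactant with mass fraction $Y$ and a product with mass fraction $1-Y$, linked by one irreversible reaction with global stoichiometric coefficient $\nu<0$ for the reactant. On $x>0$: $\rho>0$, $u$ are $C^1$, $Y$ is $C^2$, the species diffusion coefficient $D_g>0$ is a continuous function, and the reaction rate $\omega(x)=\omega(T(x),Y(x))\ge 0$ is continuous. The equations are: $-c\rho'+(\rho u)'=0$ and $\rho(u-c)Y'-(\rho D_g Y')'=\nu M\omega$ for $x>0$. Interface conditions: $\rho(0^+)(u(0^+)-c)=-\rho_s c$ (no mass accumulation); the pyrolysis injects pure reactant, i.e. the injection mass fraction is $Y(0^-)=1$; species balance $\dot m\,Y(0^-)=\dot m\,Y(0^+)-\rho(0^+)D_g(0^+)Y'(0^+)$. Far field: the reactant is completely consumed, $Y(x)\to0$, and the diffusive flux vanishes, $\rho D_g Y'(x)\to0$, as $x\to+\infty$. *)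

theory Defs
  imports "HOL-Analysis.Analysis"
begin

end

theory Submission
  imports Defs
begin

text \<open>Mass conservation makes the mass flux \<open>\<rho> (u - c)\<close> constant, equal to \<open>m = -\<rho>\<^sub>s c\<close> by the
  interface condition. The species equation then says that the total reactant flux
  \<open>m Y - \<rho> D\<^sub>g Y'\<close> is an antiderivative of \<open>\<nu> M \<omega>\<close>; it equals \<open>m\<close> at the interface (pure
  reactant is injected) and vanishes at infinity. Since \<open>\<omega> \<ge> 0\<close>, the improper integral
  of \<open>\<omega>\<close> converges, with value \<open>(0 - m) / (\<nu> M)\<close>.\<close>

lemma has_integral_Ioi_FTC_nonneg:
  fixes f F :: "real \<Rightarrow> real"
  assumes deriv: "\<And>x. x > a \<Longrightarrow> (F has_real_derivative f x) (at x)"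
    and cont: "continuous_on {a<..} f"
    and nonneg: "\<And>x. x > a \<Longrightarrow> 0 \<le> f x"
    and lim_left: "(F \<longlongrightarrow> A) (at_right a)"
    and lim_top: "(F \<longlongrightarrow> B) at_top"
  shows "(f has_integral B - A) {a<..}"
proof -
  have isCont: "isCont f x" if "x > a" for x
    using cont that by (simp add: continuous_on_eq_continuous_at)
  have "set_integrable lborel (einterval a \<infinity>) f" "(LBINT x=a..\<infinity>. f x) = B - A"
    using lim_left lim_top
    by (intro interval_integral_FTC_nonneg deriv isCont AE_I2 impI nonneg;
        simp add: ereal_tendsto_simps)+
  then show ?thesis
    by (simp add: interval_integral_to_infinity_eq has_integral_iff set_borel_integral_eq_integral)
qed

lemma DERIV_zero_Ioi_eq_at_right_limit:
  fixes f :: "real \<Rightarrow> real"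
  assumes deriv: "\<And>x. x > a \<Longrightarrow> (f has_real_derivative 0) (at x)"
    and lim: "(f \<longlongrightarrow> L) (at_right a)"
    and "x > a"
  shows "f x = L"
proof -
  obtain K where K: "\<And>y. y \<in> {a<..} \<Longrightarrow> f y = K"
    using has_field_derivative_zero_constant[of "{a<..}" f] deriv
    by (metis convex_real_interval(3) greaterThan_iff has_field_derivative_at_within)
  have "\<forall>\<^sub>F y in at_right a. f y = K"
    using K by (auto simp: eventually_at_right_field intro: gt_ex)
  then have "(f \<longlongrightarrow> K) (at_right a)"
    by (rule tendsto_eventually)
  with lim have "K = L"
    using tendsto_unique[OF trivial_limit_at_right_real] by blast
  with K \<open>x > a\<close> show ?thesis by simp
qed

lemma mass_flux_eq_at_right_limit:
  fixes rho u :: "real \<Rightarrow> real"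
  assumes rho_diff: "\<And>x. x > a \<Longrightarrow> rho differentiable (at x)"
    and u_diff: "\<And>x. x > a \<Longrightarrow> u differentiable (at x)"
    and mass_eq: "\<And>x. x > a \<Longrightarrow> - c * deriv rho x + deriv (\<lambda>y. rho y * u y) x = 0"
    and lim_rho: "(rho \<longlongrightarrow> rho0) (at_right a)"
    and lim_u: "(u \<longlongrightarrow> u0) (at_right a)"
    and "x > a"
  shows "rho x * (u x - c) = rho0 * (u0 - c)"
proof -
  have "((\<lambda>y. rho y * u y - c * rho y) has_real_derivative 0) (at x)" if "x > a" for x
  proof -
    have "((\<lambda>y. rho y * u y) has_real_derivative deriv (\<lambda>y. rho y * u y) x) (at x)"
      using rho_diff u_diff \<open>x > a\<close> by (simp add: DERIV_deriv_iff_real_differentiable)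
    moreover have "(rho has_real_derivative deriv rho x) (at x)"
      using rho_diff \<open>x > a\<close> by (simp add: DERIV_deriv_iff_real_differentiable)
    ultimately have "((\<lambda>y. rho y * u y - c * rho y) has_real_derivative
        deriv (\<lambda>y. rho y * u y) x - c * deriv rho x) (at x)"
      by (rule DERIV_diff[OF _ DERIV_cmult])
    with mass_eq[OF \<open>x > a\<close>] show ?thesis by simp
  qed
  moreover have "((\<lambda>y. rho y * u y - c * rho y) \<longlongrightarrow> rho0 * u0 - c * rho0) (at_right a)"
    by (intro tendsto_intros lim_rho lim_u)
  ultimately have "rho x * u x - c * rho x = rho0 * u0 - c * rho0"
    by (rule DERIV_zero_Ioi_eq_at_right_limit[OF _ _ \<open>x > a\<close>])
  then show ?thesis by (simp add: algebra_simps)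
qed

lemma total_reactant_flux_has_derivative:
  fixes rho u Y D omega :: "real \<Rightarrow> real"
  assumes "Y differentiable (at x)"
    and "(\<lambda>y. rho y * D y * deriv Y y) differentiable (at x)"
    and "rho x * (u x - c) = m"
    and "rho x * (u x - c) * deriv Y x - deriv (\<lambda>y. rho y * D y * deriv Y y) x = nu * M * omega x"
  shows "((\<lambda>y. m * Y y - rho y * D y * deriv Y y) has_real_derivative nu * M * omega x) (at x)"
proof -
  have "((\<lambda>y. m * Y y - rho y * D y * deriv Y y) has_real_derivative
      m * deriv Y x - deriv (\<lambda>y. rho y * D y * deriv Y y) x) (at x)"
    using assms(1,2) by (intro DERIV_diff DERIV_cmult) (simp_all add: DERIV_deriv_iff_real_differentiable)
  with assms(3,4) show ?thesis by simp
qed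

theorem proposition2:
  fixes c rho_s M nu :: real
    and rho u Y D omega :: "real \<Rightarrow> real"
    and rho0 u0 Y0 Yp0 D0 Y_inj :: real
  assumes c_neg: "c < 0" and rho_s_pos: "rho_s > 0" and M_pos: "M > 0" and nu_neg: "nu < 0"
    and rho_pos: "\<And>x. x > 0 \<Longrightarrow> rho x > 0"
    and rho_C1: "\<And>x. x > 0 \<Longrightarrow> rho differentiable (at x)"
    and rho'_cont: "continuous_on {0<..} (deriv rho)"
    and u_C1: "\<And>x. x > 0 \<Longrightarrow> u differentiable (at x)"
    and u'_cont: "continuous_on {0<..} (deriv u)"
    and Y_C1: "\<And>x. x > 0 \<Longrightarrow> Y differentiable (at x)"
    and Y_C2: "\<And>x. x > 0 \<Longrightarrow> (deriv Y) differentiable (at x)"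
    and Y''_cont: "continuous_on {0<..} (deriv (deriv Y))"
    and D_cont: "continuous_on {0<..} D"
    and D_pos: "\<And>x. x > 0 \<Longrightarrow> D x > 0"
    and omega_cont: "continuous_on {0<..} omega"
    and omega_nonneg: "\<And>x. x > 0 \<Longrightarrow> omega x \<ge> 0"
    and flux_diff: "\<And>x. x > 0 \<Longrightarrow> (\<lambda>y. rho y * D y * deriv Y y) differentiable (at x)"
    and mass_eq: "\<And>x. x > 0 \<Longrightarrow> - c * deriv rho x + deriv (\<lambda>y. rho y * u y) x = 0"
    and species_eq: "\<And>x. x > 0 \<Longrightarrow>
        rho x * (u x - c) * deriv Y x - deriv (\<lambda>y. rho y * D y * deriv Y y) x = nu * M * omega x"
    and lim_rho: "(rho \<longlongrightarrow> rho0) (at_right 0)"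
    and lim_u: "(u \<longlongrightarrow> u0) (at_right 0)"
    and lim_Y: "(Y \<longlongrightarrow> Y0) (at_right 0)"
    and lim_Y': "(deriv Y \<longlongrightarrow> Yp0) (at_right 0)"
    and lim_D: "(D \<longlongrightarrow> D0) (at_right 0)"
    and no_mass_acc: "rho0 * (u0 - c) = - rho_s * c"
    and injection: "Y_inj = 1"
    and species_bal: "(- rho_s * c) * Y_inj = (- rho_s * c) * Y0 - rho0 * D0 * Yp0"
    and far_Y: "(Y \<longlongrightarrow> 0) at_top"
    and far_flux: "((\<lambda>x. rho x * D x * deriv Y x) \<longlongrightarrow> 0) at_top"
  shows "omega integrable_on {0<..} \<and>
         integral {0<..} omega = - (- rho_s * c) / (M * nu)"
proof -
  define m where "m = - rho_s * c"
  define H where "H y = (m * Y y - rho y * D y * deriv Y y) / (nu * M)" for y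
  have "nu * M \<noteq> 0" using nu_neg M_pos by simp
  have mass_flux: "rho x * (u x - c) = m" if "x > 0" for x
    using mass_flux_eq_at_right_limit[OF rho_C1 u_C1 mass_eq lim_rho lim_u that] no_mass_acc
    by (simp add: m_def)
  have "(H has_real_derivative omega x) (at x)" if "x > 0" for x
  proof -
    have "((\<lambda>y. m * Y y - rho y * D y * deriv Y y) has_real_derivative nu * M * omega x) (at x)"
      using that by (intro total_reactant_flux_has_derivative[where u = u and c = c]
          Y_C1 flux_diff mass_flux species_eq)
    from DERIV_cdivide[OF this, of "nu * M"] show ?thesis
      using \<open>nu * M \<noteq> 0\<close> by (simp add: H_def[abs_def])
  qed
  moreover have "(H \<longlongrightarrow> m / (nu * M)) (at_right 0)"
  proof -
    have "(H \<longlongrightarrow> (m * Y0 - rho0 * D0 * Yp0) / (nu * M)) (at_right 0)"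
      unfolding H_def by (intro tendsto_intros lim_rho lim_D lim_Y lim_Y' \<open>nu * M \<noteq> 0\<close>)
    moreover have "m * Y0 - rho0 * D0 * Yp0 = m"
      using species_bal unfolding injection m_def by linarith
    ultimately show ?thesis by simp
  qed
  moreover have "(H \<longlongrightarrow> 0) at_top"
  proof -
    have "(H \<longlongrightarrow> (m * 0 - 0) / (nu * M)) at_top"
      unfolding H_def by (intro tendsto_intros far_Y far_flux \<open>nu * M \<noteq> 0\<close>)
    then show ?thesis by simp
  qed
  ultimately have "(omega has_integral 0 - m / (nu * M)) {0<..}"
    using omega_cont omega_nonneg by (intro has_integral_Ioi_FTC_nonneg)
  then show ?thesis by (auto simp: m_def mult.commute)
qed

end
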